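(* Let $E$ be any graph, $K$ a field, and let $(H,S)$ and $(G,T)$ be admissible pairs of $E$ with $(H,S)\leq (G,T)$. Let $v\in B_G$. Then $v^G\in I(H,S)$ (in $L_K(E)$) if and only if $v\in S$ and $v$ emits no edges whose range lies in $G\setminus H$.
   Context: $E$ is a directed graph of arbitrary cardinality with source and range maps $\mathbf{s},\mathbf{r}$; a vertex is an infinite emitter if it emits infinitely many edges. $L_K(E)$ denotes the Leavitt path algebra of $E$ over $K$ (generated by vertices, edges and ghost edges $e^*$ subject to the usual relations (V), (E1), (E2), (CK1), (CK2)). A set $H\subseteq E^0$ is hereditary if every vertex reachable by a path from a vertex of $H$ lies in $H$, and saturated if every vertex $v$ that emits finitely many but at least one edge and has $\mathbf{r}(\mathbf{s}^{-1}(v))\subseteq H$ lies in $H$. For hereditary saturated $H$, the breaking vertices of $H$ form the set $B_H=\{v\in E^0\setminus H: v \text{ is an infinite emitter and } 0<|\mathbf{s}^{-1}(v)\cap\mathbf{r}^{-1}(E^0\setminus H)|<\infty\}$, and for $v\in B_H$ one puts $v^H=v-\sum ee^*$, the sum over $e\in \mathbf{s}^{-1}(v)\cap\mathbf{r}^{-1}(E^0\setminus H)$. An admissible pair is a pair $(H,S)$ with $H$ hereditary and saturated and $S\subseteq B_H$; $I(H,S)$ is the ideal of $L_K(E)$ generated by $H\cup\{v^H: v\in S\}$. Admissible pairs are ordered by $(H,S)\leq (G,T)$ iff $H\subseteq G$ and $S\subseteq G\cup T$. *)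

theory Defs
  imports "HOL-Algebra.QuotRing"
begin

text \<open>A directed graph E is given by arbitrary types of vertices 'v and edges 'e
  together with source and range maps s r :: 'e => 'v (E^0 = UNIV, E^1 = UNIV).\<close>

definition edge_rel :: "('e \<Rightarrow> 'v) \<Rightarrow> ('e \<Rightarrow> 'v) \<Rightarrow> ('v \<times> 'v) set" where
  "edge_rel s r = {(s e, r e) | e. True}"

definition infinite_emitter :: "('e \<Rightarrow> 'v) \<Rightarrow> 'v \<Rightarrow> bool" where
  "infinite_emitter s v \<longleftrightarrow> infinite (s -` {v})"

definition regular_vertex :: "('e \<Rightarrow> 'v) \<Rightarrow> 'v \<Rightarrow> bool" where
  "regular_vertex s v \<longleftrightarrow> finite (s -` {v}) \<and> s -` {v} \<noteq> {}"

definition hereditary :: "('e \<Rightarrow> 'v) \<Rightarrow> ('e \<Rightarrow> 'v) \<Rightarrow> 'v set \<Rightarrow> bool" where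
  "hereditary s r H \<longleftrightarrow> (\<forall>u\<in>H. \<forall>w. (u, w) \<in> (edge_rel s r)\<^sup>* \<longrightarrow> w \<in> H)"

definition saturated :: "('e \<Rightarrow> 'v) \<Rightarrow> ('e \<Rightarrow> 'v) \<Rightarrow> 'v set \<Rightarrow> bool" where
  "saturated s r H \<longleftrightarrow> (\<forall>v. regular_vertex s v \<and> r ` (s -` {v}) \<subseteq> H \<longrightarrow> v \<in> H)"

definition breaking_vertices :: "('e \<Rightarrow> 'v) \<Rightarrow> ('e \<Rightarrow> 'v) \<Rightarrow> 'v set \<Rightarrow> 'v set" where
  "breaking_vertices s r H = {v. v \<notin> H \<and> infinite_emitter s v \<and>
       finite (s -` {v} \<inter> r -` (- H)) \<and> 0 < card (s -` {v} \<inter> r -` (- H))}"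

definition admissible :: "('e \<Rightarrow> 'v) \<Rightarrow> ('e \<Rightarrow> 'v) \<Rightarrow> 'v set \<Rightarrow> 'v set \<Rightarrow> bool" where
  "admissible s r H S \<longleftrightarrow> hereditary s r H \<and> saturated s r H \<and> S \<subseteq> breaking_vertices s r H"

definition adm_le :: "'v set \<times> 'v set \<Rightarrow> 'v set \<times> 'v set \<Rightarrow> bool" where
  "adm_le HS GT \<longleftrightarrow> fst HS \<subseteq> fst GT \<and> snd HS \<subseteq> fst GT \<union> snd GT"

datatype ('v, 'e) gen = Vx 'v | Ed 'e | Gh 'e

text \<open>Elements: finitely supported K-valued functions on words in the generators.\<close>
type_synonym ('v, 'e, 'k) fa = "('v, 'e) gen list \<Rightarrow> 'k"

definition fa_add :: "('v,'e,'k::field) fa \<Rightarrow> ('v,'e,'k) fa \<Rightarrow> ('v,'e,'k) fa" where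
  "fa_add f g = (\<lambda>w. f w + g w)"

definition fa_diff :: "('v,'e,'k::field) fa \<Rightarrow> ('v,'e,'k) fa \<Rightarrow> ('v,'e,'k) fa" where
  "fa_diff f g = (\<lambda>w. f w - g w)"

definition fa_mult :: "('v,'e,'k::field) fa \<Rightarrow> ('v,'e,'k) fa \<Rightarrow> ('v,'e,'k) fa" where
  "fa_mult f g = (\<lambda>w. \<Sum>i\<le>length w. f (take i w) * g (drop i w))"

definition fa_zero :: "('v,'e,'k::field) fa" where
  "fa_zero = (\<lambda>w. 0)"

definition fa_one :: "('v,'e,'k::field) fa" where
  "fa_one = (\<lambda>w. if w = [] then 1 else 0)"

definition fa_sum :: "('a \<Rightarrow> ('v,'e,'k::field) fa) \<Rightarrow> 'a set \<Rightarrow> ('v,'e,'k) fa" where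
  "fa_sum f A = (\<lambda>w. \<Sum>a\<in>A. f a w)"

definition gen_el :: "('v,'e) gen \<Rightarrow> ('v,'e,'k::field) fa" where
  "gen_el x = (\<lambda>w. if w = [x] then 1 else 0)"

definition fa_ring :: "('v,'e,'k::field) fa ring" where
  "fa_ring = \<lparr>carrier = {f. finite {w. f w \<noteq> 0}}, mult = fa_mult, one = fa_one,
              zero = fa_zero, add = fa_add\<rparr>"

definition lpa_rels :: "('e \<Rightarrow> 'v) \<Rightarrow> ('e \<Rightarrow> 'v) \<Rightarrow> ('v,'e,'k::field) fa set" where
  "lpa_rels s r =
     {fa_diff (fa_mult (gen_el (Vx v)) (gen_el (Vx w))) (if v = w then gen_el (Vx v) else fa_zero) | v w. True}
   \<union> {fa_diff (fa_mult (gen_el (Vx (s e))) (gen_el (Ed e))) (gen_el (Ed e)) | e. True}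
   \<union> {fa_diff (fa_mult (gen_el (Ed e)) (gen_el (Vx (r e)))) (gen_el (Ed e)) | e. True}
   \<union> {fa_diff (fa_mult (gen_el (Vx (r e))) (gen_el (Gh e))) (gen_el (Gh e)) | e. True}
   \<union> {fa_diff (fa_mult (gen_el (Gh e)) (gen_el (Vx (s e)))) (gen_el (Gh e)) | e. True}
   \<union> {fa_diff (fa_mult (gen_el (Gh e)) (gen_el (Ed f))) (if e = f then gen_el (Vx (r e)) else fa_zero) | e f. True}
   \<union> {fa_diff (gen_el (Vx v)) (fa_sum (\<lambda>e. fa_mult (gen_el (Ed e)) (gen_el (Gh e))) (s -` {v})) | v. regular_vertex s v}"

text \<open>The (unitization of the) Leavitt path algebra: free unital algebra modulo the
  ideal generated by the relations (V),(E1),(E2),(CK1),(CK2).  L_K(E) is the ideal of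
  this ring spanned by the classes of nonempty words; ideals of L_K(E) generated by
  subsets of L_K(E) coincide with ideals of this ring generated by the same subsets.\<close>

definition lpa_rel_ideal :: "('e \<Rightarrow> 'v) \<Rightarrow> ('e \<Rightarrow> 'v) \<Rightarrow> ('v,'e,'k::field) fa set" where
  "lpa_rel_ideal s r = genideal fa_ring (lpa_rels s r)"

definition LPA :: "('e \<Rightarrow> 'v) \<Rightarrow> ('e \<Rightarrow> 'v) \<Rightarrow> ('v,'e,'k::field) fa set ring" where
  "LPA s r = fa_ring Quot lpa_rel_ideal s r"

definition lpa_cls :: "('e \<Rightarrow> 'v) \<Rightarrow> ('e \<Rightarrow> 'v) \<Rightarrow> ('v,'e,'k::field) fa \<Rightarrow> ('v,'e,'k) fa set" where
  "lpa_cls s r x = a_r_coset fa_ring (lpa_rel_ideal s r) x"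

definition vH :: "('e \<Rightarrow> 'v) \<Rightarrow> ('e \<Rightarrow> 'v) \<Rightarrow> 'v set \<Rightarrow> 'v \<Rightarrow> ('v,'e,'k::field) fa" where
  "vH s r H v = fa_diff (gen_el (Vx v))
      (fa_sum (\<lambda>e. fa_mult (gen_el (Ed e)) (gen_el (Gh e))) (s -` {v} \<inter> r -` (- H)))"

definition I_HS :: "('e \<Rightarrow> 'v) \<Rightarrow> ('e \<Rightarrow> 'v) \<Rightarrow> 'v set \<Rightarrow> 'v set \<Rightarrow> ('v,'e,'k::field) fa set set" where
  "I_HS s r H S = genideal (LPA s r)
      ((\<lambda>u. lpa_cls s r (gen_el (Vx u))) ` H \<union> (\<lambda>u. lpa_cls s r (vH s r H u)) ` S)"

end

theory Submission
  imports Defs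
begin

text \<open>If v emits no edge into G - H, then v^G = v^H, a generator of I(H,S). For the converse
  we let the free algebra act on the K-vector space spanned by a set of paths avoiding H:
  vertices act as projections, edges prepend themselves and ghost edges remove themselves from
  the front. The relations, the vertices of H and the v^H with v in S all act as zero provided
  no path stops at a regular vertex or at a vertex of S. Such paths exist: following edges out
  of H greedily from a vertex outside H either goes on forever or, by saturation, stops at a
  vertex that is neither regular nor in S. If v is not in S, the trivial path at v qualifies; if
  v emits an edge e into G - H, so does e followed by such a path from r e. Either path is fixed
  by v^G, which therefore lies outside I(H,S).\<close>

section \<open>Ring structure of the free algebra\<close>

definition fsupp :: "('v,'e,'k::field) fa \<Rightarrow> ('v,'e) gen list set" where
  "fsupp f = {w. f w \<noteq> 0}"

lemma carrier_fa_ring: "carrier fa_ring = {f. finite (fsupp f)}"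
  by (simp add: fa_ring_def fsupp_def)

lemma fa_ring_simps [simp]:
  "mult fa_ring = fa_mult" "add fa_ring = fa_add" "one fa_ring = fa_one" "zero fa_ring = fa_zero"
  by (simp_all add: fa_ring_def)

lemma fa_mult_eq_double_sum:
  assumes "finite A" "finite B" "fsupp f \<subseteq> A" "fsupp g \<subseteq> B"
  shows "fa_mult f g w = (\<Sum>u\<in>A. \<Sum>v\<in>B. if u @ v = w then f u * g v else 0)"
proof -
  let ?split = "\<lambda>i. (take i w, drop i w)"
  have splits: "?split ` {..length w} = {p. fst p @ snd p = w}"
  proof (rule subset_antisym)
    show "{p. fst p @ snd p = w} \<subseteq> ?split ` {..length w}"
    proof
      fix p assume "p \<in> {p. fst p @ snd p = w}"
      then show "p \<in> ?split ` {..length w}"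
        by (cases p) (auto intro!: image_eqI[of _ _ "length (fst p)"])
    qed
  qed auto
  have inj: "inj_on ?split {..length w}"
    by (auto simp: inj_on_def) (metis length_take min.absorb2)
  have "(\<Sum>u\<in>A. \<Sum>v\<in>B. if u @ v = w then f u * g v else 0)
      = (\<Sum>p\<in>{p\<in>A\<times>B. fst p @ snd p = w}. f (fst p) * g (snd p))"
    using assms by (simp add: sum.cartesian_product case_prod_beta sum.inter_filter)
  also have "\<dots> = (\<Sum>p\<in>?split ` {..length w}. f (fst p) * g (snd p))"
  proof (rule sum.mono_neutral_cong_left)
    show "{p\<in>A\<times>B. fst p @ snd p = w} \<subseteq> ?split ` {..length w}"
      using splits by auto
    show "\<forall>p\<in>?split ` {..length w} - {p\<in>A\<times>B. fst p @ snd p = w}. f (fst p) * g (snd p) = 0"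
      using assms(3,4) splits by (auto simp: fsupp_def)
  qed simp_all
  also have "\<dots> = fa_mult f g w"
    by (simp add: sum.reindex[OF inj] fa_mult_def)
  finally show ?thesis ..
qed

lemma fsupp_fa_mult:
  assumes "finite (fsupp f)" "finite (fsupp g)"
  shows "fsupp (fa_mult f g) \<subseteq> (\<lambda>(u,v). u @ v) ` (fsupp f \<times> fsupp g)"
proof
  fix w assume "w \<in> fsupp (fa_mult f g)"
  then have "(\<Sum>u\<in>fsupp f. \<Sum>v\<in>fsupp g. if u @ v = w then f u * g v else 0) \<noteq> 0"
    using fa_mult_eq_double_sum[OF assms order_refl order_refl] by (simp add: fsupp_def)
  then obtain u v where "u \<in> fsupp f" "v \<in> fsupp g" "u @ v = w"
    by (smt (verit) sum.neutral)
  then show "w \<in> (\<lambda>(u,v). u @ v) ` (fsupp f \<times> fsupp g)" by force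
qed

lemma finite_fsupp_fa_mult:
  "finite (fsupp f) \<Longrightarrow> finite (fsupp g) \<Longrightarrow> finite (fsupp (fa_mult f g))"
  by (rule finite_subset[OF fsupp_fa_mult]) auto

lemma finite_fsupp_fa_add:
  "finite (fsupp f) \<Longrightarrow> finite (fsupp g) \<Longrightarrow> finite (fsupp (fa_add f g))"
  by (rule finite_subset[of _ "fsupp f \<union> fsupp g"]) (auto simp: fsupp_def fa_add_def)

lemma finite_fsupp_fa_diff:
  "finite (fsupp f) \<Longrightarrow> finite (fsupp g) \<Longrightarrow> finite (fsupp (fa_diff f g))"
  by (rule finite_subset[of _ "fsupp f \<union> fsupp g"]) (auto simp: fsupp_def fa_diff_def)

lemma finite_fsupp_fa_sum:
  "finite A \<Longrightarrow> (\<And>a. a \<in> A \<Longrightarrow> finite (fsupp (F a))) \<Longrightarrow> finite (fsupp (fa_sum F A))"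
  by (rule finite_subset[of _ "\<Union>a\<in>A. fsupp (F a)"]) (auto simp: fsupp_def fa_sum_def intro: ccontr)

lemma fsupp_fa_zero [simp]: "fsupp fa_zero = {}"
  by (simp add: fsupp_def fa_zero_def)

lemma fsupp_fa_one: "fsupp fa_one \<subseteq> {[]}"
  by (auto simp: fsupp_def fa_one_def)

lemma fsupp_gen_el [simp]: "fsupp (gen_el x) = {[x]}"
  by (auto simp: fsupp_def gen_el_def)

lemma finite_fsupp_gen_el: "finite (fsupp (gen_el x))"
  by simp

lemma sum_fa_mult_weighted:
  assumes "finite A" "finite B" "finite W" "fsupp f \<subseteq> A" "fsupp g \<subseteq> B"
    and "\<And>u v. u \<in> A \<Longrightarrow> v \<in> B \<Longrightarrow> u @ v \<in> W"
  shows "(\<Sum>w\<in>W. fa_mult f g w * c w) = (\<Sum>u\<in>A. \<Sum>v\<in>B. f u * g v * c (u @ v))"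
proof -
  have "(\<Sum>w\<in>W. fa_mult f g w * c w)
     = (\<Sum>u\<in>A. \<Sum>v\<in>B. \<Sum>w\<in>W. if u @ v = w then f u * g v * c w else 0)"
    unfolding fa_mult_eq_double_sum[OF assms(1,2,4,5)] sum_distrib_right
    by (subst sum.swap, subst sum.swap) (auto intro!: sum.cong sum.swap)
  also have "\<dots> = (\<Sum>u\<in>A. \<Sum>v\<in>B. f u * g v * c (u @ v))"
    using assms(3,6) by (intro sum.cong refl) (simp add: sum.delta')
  finally show ?thesis .
qed

lemma fa_mult_assoc:
  assumes f: "finite (fsupp f)" and g: "finite (fsupp g)" and h: "finite (fsupp h)"
  shows "fa_mult (fa_mult f g) h = fa_mult f (fa_mult g h)"
proof
  fix w
  define A B C where "A = fsupp f" and "B = fsupp g" and "C = fsupp h"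
  define AB BC where "AB = (\<lambda>(u,v). u @ v) ` (A \<times> B)" and "BC = (\<lambda>(u,v). u @ v) ` (B \<times> C)"
  have fin: "finite A" "finite B" "finite C" "finite AB" "finite BC"
    using f g h by (auto simp: A_def B_def C_def AB_def BC_def)
  have AB: "fsupp (fa_mult f g) \<subseteq> AB" and BC: "fsupp (fa_mult g h) \<subseteq> BC"
    using fsupp_fa_mult[OF f g] fsupp_fa_mult[OF g h] by (simp_all add: A_def B_def C_def AB_def BC_def)
  let ?triple = "\<Sum>u\<in>A. \<Sum>v\<in>B. \<Sum>t\<in>C. if u @ v @ t = w then f u * g v * h t else 0"
  have "fa_mult (fa_mult f g) h w = (\<Sum>p\<in>AB. \<Sum>t\<in>C. if p @ t = w then fa_mult f g p * h t else 0)"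
    by (rule fa_mult_eq_double_sum[OF fin(4,3) AB]) (simp add: C_def)
  also have "\<dots> = (\<Sum>t\<in>C. \<Sum>p\<in>AB. fa_mult f g p * (h t * (if p @ t = w then 1 else 0)))"
    by (subst sum.swap) (intro sum.cong refl, simp)
  also have "\<dots> = (\<Sum>t\<in>C. \<Sum>u\<in>A. \<Sum>v\<in>B. f u * g v * (h t * (if (u @ v) @ t = w then 1 else 0)))"
    by (intro sum.cong refl sum_fa_mult_weighted[OF fin(1,2,4)]) (auto simp: A_def B_def AB_def)
  also have "\<dots> = ?triple"
    by (subst sum.swap, subst (2) sum.swap) (intro sum.cong refl, simp)
  finally have left: "fa_mult (fa_mult f g) h w = ?triple" .
  have "fa_mult f (fa_mult g h) w = (\<Sum>u\<in>A. \<Sum>q\<in>BC. if u @ q = w then f u * fa_mult g h q else 0)"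
    by (rule fa_mult_eq_double_sum[OF fin(1,5) _ BC]) (simp add: A_def)
  also have "\<dots> = (\<Sum>u\<in>A. f u * (\<Sum>q\<in>BC. fa_mult g h q * (if u @ q = w then 1 else 0)))"
    by (simp add: sum_distrib_left) (intro sum.cong refl, simp)
  also have "\<dots> = (\<Sum>u\<in>A. f u * (\<Sum>v\<in>B. \<Sum>t\<in>C. g v * h t * (if u @ (v @ t) = w then 1 else 0)))"
    by (intro sum.cong refl arg_cong2[where f="(*)"] sum_fa_mult_weighted[OF fin(2,3,5)])
      (auto simp: B_def C_def BC_def)
  also have "\<dots> = ?triple"
    by (simp add: sum_distrib_left) (intro sum.cong refl, simp)
  finally show "fa_mult (fa_mult f g) h w = fa_mult f (fa_mult g h) w"
    using left by simp
qed

lemma fa_one_mult: "finite (fsupp f) \<Longrightarrow> fa_mult fa_one f = f"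
  by (rule ext, subst fa_mult_eq_double_sum[OF _ _ fsupp_fa_one order_refl])
    (auto simp: sum.delta fa_one_def fsupp_def)

lemma fa_mult_one: "finite (fsupp f) \<Longrightarrow> fa_mult f fa_one = f"
  by (rule ext, subst fa_mult_eq_double_sum[OF _ _ order_refl fsupp_fa_one])
    (auto simp: sum.delta fa_one_def fsupp_def)

lemma abelian_group_fa_ring: "abelian_group (fa_ring :: ('v,'e,'k::field) fa ring)"
  apply (rule abelian_groupI, simp_all add: carrier_fa_ring)
  subgoal by (rule finite_fsupp_fa_add)
  subgoal by (simp add: fa_add_def add.assoc)
  subgoal by (simp add: fa_add_def add.commute)
  subgoal by (simp add: fa_add_def fa_zero_def)
  subgoal for f by (intro exI[of _ "\<lambda>w. - f w"]) (simp add: fsupp_def fa_add_def fa_zero_def)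
  done

lemma ring_fa_ring: "ring (fa_ring :: ('v,'e,'k::field) fa ring)"
  apply (rule ringI[OF abelian_group_fa_ring])
    apply (rule monoidI, simp_all add: carrier_fa_ring)
  subgoal by (rule finite_fsupp_fa_mult)
  subgoal using fsupp_fa_one finite_subset by blast
  subgoal by (simp add: fa_mult_assoc)
  subgoal by (simp add: fa_one_mult)
  subgoal by (simp add: fa_mult_one)
  subgoal by (simp add: fun_eq_iff fa_mult_def fa_add_def sum.distrib algebra_simps)
  subgoal by (simp add: fun_eq_iff fa_mult_def fa_add_def sum.distrib algebra_simps)
  done

lemma a_inv_fa_ring:
  assumes "finite (fsupp f)"
  shows "a_inv (fa_ring :: ('v,'e,'k::field) fa ring) f = (\<lambda>w. - f w)"
proof -
  interpret ring "fa_ring :: ('v,'e,'k::field) fa ring" by (rule ring_fa_ring)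
  show ?thesis
    by (rule minus_equality)
      (use assms in \<open>auto simp: carrier_fa_ring fsupp_def fa_add_def fa_zero_def\<close>)
qed

section \<open>Representations on spaces of paths\<close>

lemma lpa_cls_notin_I_HS:
  fixes J :: "('v,'e,'k::field) fa set"
  assumes J: "ideal J fa_ring" "lpa_rels s r \<subseteq> J" "(\<lambda>u. gen_el (Vx u)) ` H \<subseteq> J" "vH s r H ` S \<subseteq> J"
    and f: "f \<in> carrier fa_ring" "f \<notin> J"
  shows "lpa_cls s r f \<notin> I_HS s r H S"
proof
  interpret R: ring "fa_ring :: ('v,'e,'k::field) fa ring" by (rule ring_fa_ring)
  let ?I = "lpa_rel_ideal s r :: ('v,'e,'k::field) fa set"
  let ?J = "(+>\<^bsub>fa_ring\<^esub>) ?I ` J"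
  have "J \<subseteq> carrier fa_ring"
    using J(1) by (simp add: additive_subgroup.a_subset ideal.axioms(1))
  then have I: "ideal ?I fa_ring"
    unfolding lpa_rel_ideal_def using J(2) by (blast intro: R.genideal_ideal)
  have IJ: "?I \<subseteq> J"
    unfolding lpa_rel_ideal_def by (rule R.genideal_minimal[OF J(1,2)])
  have "ideal ?J (LPA s r)"
    unfolding LPA_def by (rule R.ring_ideal_imp_quot_ideal[OF I J(1)])
  moreover have "(\<lambda>u. lpa_cls s r (gen_el (Vx u))) ` H \<union> (\<lambda>u. lpa_cls s r (vH s r H u)) ` S \<subseteq> ?J"
    using J(3,4) by (auto simp: lpa_cls_def)
  ultimately have I_HS_J: "I_HS s r H S \<subseteq> ?J"
    unfolding I_HS_def genideal_def by blast
  assume "lpa_cls s r f \<in> I_HS s r H S"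
  then have "?I +>\<^bsub>fa_ring\<^esub> f \<in> ?J"
    using I_HS_J by (auto simp: lpa_cls_def)
  moreover have "?J \<subseteq> carrier (fa_ring Quot ?I)"
    using \<open>ideal ?J (LPA s r)\<close> unfolding LPA_def
    by (simp add: additive_subgroup.a_subset ideal.axioms(1))
  ultimately have "f \<in> \<Union> ?J"
    using R.canonical_proj_vimage_mem_iff[OF I _ f(1)] by blast
  also have "\<Union> ?J = J"
    using R.ideal_incl_iff[OF I J(1)] IJ by blast
  finally show False using f(2) by contradiction
qed

text \<open>The paths x with valid x start at start x; pop splits off the first edge and push
  prepends one. The last three assumptions make (CK2), the vertices of H and the v^H with
  v in S act as zero.\<close>

locale path_space =
  fixes s r :: "'e \<Rightarrow> 'v" and H S :: "'v set"
    and valid :: "'x \<Rightarrow> bool" and start :: "'x \<Rightarrow> 'v"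
    and pop :: "'x \<Rightarrow> ('e \<times> 'x) option" and push :: "'e \<Rightarrow> 'x \<Rightarrow> 'x"
  assumes push: "valid x \<Longrightarrow> start x = r e \<Longrightarrow>
      valid (push e x) \<and> pop (push e x) = Some (e, x) \<and> start (push e x) = s e"
    and pop: "valid y \<Longrightarrow> pop y = Some (e, x) \<Longrightarrow> y = push e x \<and> valid x \<and> start x = r e"
    and pop_regular: "valid x \<Longrightarrow> regular_vertex s (start x) \<Longrightarrow> pop x \<noteq> None"
    and start_notin_H: "valid x \<Longrightarrow> start x \<notin> H"
    and pop_S: "valid x \<Longrightarrow> start x \<in> S \<Longrightarrow> \<exists>e x'. pop x = Some (e, x') \<and> r e \<notin> H"
begin

lemma pop_SomeD:
  assumes "pop y = Some (e, x)" "valid y"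
  shows "y = push e x" "valid x" "start x = r e" "start y = s e"
  using pop[OF assms(2,1)] push by metis+

fun gen_act :: "('v,'e) gen \<Rightarrow> 'x \<Rightarrow> 'x option" where
  "gen_act (Vx u) x = (if start x = u then Some x else None)"
| "gen_act (Ed e) x = (if start x = r e then Some (push e x) else None)"
| "gen_act (Gh e) x = (case pop x of None \<Rightarrow> None | Some (f, x') \<Rightarrow> if f = e then Some x' else None)"

primrec word_act :: "('v,'e) gen list \<Rightarrow> 'x \<Rightarrow> 'x option" where
  "word_act [] x = Some x"
| "word_act (g # w) x = Option.bind (word_act w x) (gen_act g)"

lemma word_act_append: "word_act (u @ v) x = Option.bind (word_act v x) (word_act u)"
  by (induction u) simp_all

lemma gen_act_valid: "valid x \<Longrightarrow> gen_act g x = Some z \<Longrightarrow> valid z"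
  by (cases g) (auto simp: push pop split: if_splits option.splits)

lemma word_act_valid: "valid x \<Longrightarrow> word_act w x = Some z \<Longrightarrow> valid z"
  by (induction w arbitrary: z) (auto simp: gen_act_valid bind_eq_Some_conv)

lemma gen_act_inj:
  "valid x1 \<Longrightarrow> valid x2 \<Longrightarrow> gen_act g x1 = Some y \<Longrightarrow> gen_act g x2 = Some y \<Longrightarrow> x1 = x2"
  by (cases g) (auto split: if_splits option.splits, metis push option.inject prod.inject, metis pop)

lemma word_act_inj:
  "valid x1 \<Longrightarrow> valid x2 \<Longrightarrow> word_act w x1 = Some y \<Longrightarrow> word_act w x2 = Some y \<Longrightarrow> x1 = x2"
proof (induction w arbitrary: y)
  case (Cons g w)
  then obtain z1 z2 where "word_act w x1 = Some z1" "word_act w x2 = Some z2"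
    and "gen_act g z1 = Some y" "gen_act g z2 = Some y"
    by (auto simp: bind_eq_Some_conv)
  with Cons show ?case
    using gen_act_inj word_act_valid by metis
qed simp

text \<open>The coefficient of y in f x, for the action of the free algebra on the K-vector space
  with basis the valid paths.\<close>

definition rep_entry :: "('v,'e,'k::field) fa \<Rightarrow> 'x \<Rightarrow> 'x \<Rightarrow> 'k" where
  "rep_entry f y x = (\<Sum>w\<in>fsupp f. f w * of_bool (word_act w x = Some y))"

lemma rep_entry_eq_sum:
  "finite W \<Longrightarrow> fsupp f \<subseteq> W \<Longrightarrow> rep_entry f y x = (\<Sum>w\<in>W. f w * of_bool (word_act w x = Some y))"
  unfolding rep_entry_def by (rule sum.mono_neutral_left) (auto simp: fsupp_def)

lemma rep_entry_fa_mult: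
  assumes "finite (fsupp a)" "finite (fsupp f)"
  shows "rep_entry (fa_mult a f) y x
    = (\<Sum>u\<in>fsupp a. \<Sum>v\<in>fsupp f. a u * f v * of_bool (word_act (u @ v) x = Some y))"
proof -
  let ?W = "(\<lambda>(u,v). u @ v) ` (fsupp a \<times> fsupp f)"
  have "rep_entry (fa_mult a f) y x = (\<Sum>w\<in>?W. fa_mult a f w * of_bool (word_act w x = Some y))"
    using assms fsupp_fa_mult by (intro rep_entry_eq_sum) auto
  also have "\<dots> = (\<Sum>u\<in>fsupp a. \<Sum>v\<in>fsupp f. a u * f v * of_bool (word_act (u @ v) x = Some y))"
    using assms by (intro sum_fa_mult_weighted) auto
  finally show ?thesis .
qed

text \<open>Words act by partial injections, so for each word u at most one valid z satisfies
  u \<cdot> z = y; this turns the inner sum into a single entry of f.\<close>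

lemma rep_entry_fa_mult_left_zero:
  fixes a f :: "('v,'e,'k::field) fa"
  assumes "finite (fsupp a)" "finite (fsupp f)" "valid x" "\<And>z. rep_entry f z x = 0"
  shows "rep_entry (fa_mult a f) y x = 0"
proof -
  have inner: "(\<Sum>v\<in>fsupp f. f v * of_bool (word_act (u @ v) x = Some y)) = 0" for u
  proof (cases "\<exists>z. valid z \<and> word_act u z = Some y")
    case True
    then obtain z where z: "valid z" "word_act u z = Some y" by blast
    have "word_act (u @ v) x = Some y \<longleftrightarrow> word_act v x = Some z" for v
      using z word_act_inj word_act_valid[OF assms(3)]
      by (auto simp: word_act_append bind_eq_Some_conv)
    then have "(\<Sum>v\<in>fsupp f. f v * of_bool (word_act (u @ v) x = Some y)) = rep_entry f z x"
      by (simp add: rep_entry_def)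
    then show ?thesis using assms(4) by simp
  next
    case False
    then have "word_act (u @ v) x \<noteq> Some y" for v
      using word_act_valid[OF assms(3)] by (auto simp: word_act_append bind_eq_Some_conv)
    then show ?thesis by simp
  qed
  have "rep_entry (fa_mult a f) y x
      = (\<Sum>u\<in>fsupp a. a u * (\<Sum>v\<in>fsupp f. f v * of_bool (word_act (u @ v) x = Some y)))"
    by (simp add: rep_entry_fa_mult[OF assms(1,2)] sum_distrib_left mult.assoc)
  then show ?thesis by (simp add: inner)
qed

lemma rep_entry_fa_mult_right_zero:
  fixes a f :: "('v,'e,'k::field) fa"
  assumes "finite (fsupp a)" "finite (fsupp f)" "valid x" "\<And>z y. valid z \<Longrightarrow> rep_entry f y z = 0"
  shows "rep_entry (fa_mult f a) y x = 0"
proof -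
  have inner: "(\<Sum>u\<in>fsupp f. f u * of_bool (word_act (u @ v) x = Some y)) = 0" for v
  proof (cases "word_act v x")
    case (Some z)
    then have "(\<Sum>u\<in>fsupp f. f u * of_bool (word_act (u @ v) x = Some y)) = rep_entry f y z"
      by (simp add: rep_entry_def word_act_append)
    then show ?thesis using assms(4) word_act_valid[OF assms(3) Some] by simp
  qed (simp add: word_act_append)
  have "rep_entry (fa_mult f a) y x
      = (\<Sum>v\<in>fsupp a. a v * (\<Sum>u\<in>fsupp f. f u * of_bool (word_act (u @ v) x = Some y)))"
    by (simp add: rep_entry_fa_mult[OF assms(2,1)] sum_distrib_left mult_ac) (rule sum.swap)
  then show ?thesis by (simp add: inner)
qed

lemma rep_entry_fa_add:
  "finite (fsupp f) \<Longrightarrow> finite (fsupp g) \<Longrightarrow> rep_entry (fa_add f g) y x = rep_entry f y x + rep_entry g y x"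
  by (subst (1 2 3) rep_entry_eq_sum[of "fsupp f \<union> fsupp g"])
    (auto simp: fsupp_def fa_add_def sum.distrib algebra_simps)

lemma rep_entry_fa_diff:
  "finite (fsupp f) \<Longrightarrow> finite (fsupp g) \<Longrightarrow> rep_entry (fa_diff f g) y x = rep_entry f y x - rep_entry g y x"
  by (subst (1 2 3) rep_entry_eq_sum[of "fsupp f \<union> fsupp g"])
    (auto simp: fsupp_def fa_diff_def sum_subtractf algebra_simps)

lemma rep_entry_uminus: "rep_entry (\<lambda>w. - f w) y x = - rep_entry f y x"
  by (simp add: rep_entry_def fsupp_def sum_negf)

lemma rep_entry_fa_zero: "rep_entry fa_zero y x = 0"
  by (simp add: rep_entry_def)

lemma rep_entry_fa_sum:
  fixes F :: "'a \<Rightarrow> ('v,'e,'k::field) fa"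
  assumes "finite A" "\<And>a. a \<in> A \<Longrightarrow> finite (fsupp (F a))"
  shows "rep_entry (fa_sum F A) y x = (\<Sum>a\<in>A. rep_entry (F a) y x)"
proof -
  let ?W = "\<Union>a\<in>A. fsupp (F a)"
  have W: "finite ?W" "fsupp (fa_sum F A) \<subseteq> ?W"
    using assms by (auto simp: fsupp_def fa_sum_def intro: ccontr)
  have "rep_entry (fa_sum F A) y x = (\<Sum>w\<in>?W. \<Sum>a\<in>A. F a w * of_bool (word_act w x = Some y))"
    unfolding rep_entry_eq_sum[OF W] by (simp add: fa_sum_def sum_distrib_right)
  also have "\<dots> = (\<Sum>a\<in>A. \<Sum>w\<in>?W. F a w * of_bool (word_act w x = Some y))"
    by (rule sum.swap)
  also have "\<dots> = (\<Sum>a\<in>A. rep_entry (F a) y x)"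
    using W(1) by (intro sum.cong refl, subst rep_entry_eq_sum) auto
  finally show ?thesis .
qed

lemma rep_entry_gen_el: "rep_entry (gen_el g :: ('v,'e,'k::field) fa) y x = of_bool (gen_act g x = Some y)"
  unfolding rep_entry_def fsupp_gen_el by (simp add: gen_el_def)

lemma rep_entry_gen_el_mult:
  "rep_entry (fa_mult (gen_el g) (gen_el h) :: ('v,'e,'k::field) fa) y x
    = of_bool (Option.bind (gen_act h x) (gen_act g) = Some y)"
  unfolding rep_entry_fa_mult[OF finite_fsupp_gen_el finite_fsupp_gen_el] fsupp_gen_el
  by (simp add: gen_el_def)

definition annihilator :: "('v,'e,'k::field) fa set" where
  "annihilator = {f. finite (fsupp f) \<and> (\<forall>x y. valid x \<longrightarrow> rep_entry f y x = 0)}"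

lemma ideal_annihilator: "ideal (annihilator :: ('v,'e,'k::field) fa set) fa_ring"
proof (rule idealI[OF ring_fa_ring])
  show "subgroup (annihilator :: ('v,'e,'k::field) fa set) (add_monoid fa_ring)"
  proof
    fix f assume "f \<in> (annihilator :: ('v,'e,'k::field) fa set)"
    then show "inv\<^bsub>add_monoid fa_ring\<^esub> f \<in> (annihilator :: ('v,'e,'k::field) fa set)"
      using a_inv_fa_ring[of f] 
      by (auto simp: annihilator_def a_inv_def rep_entry_uminus) (simp add: fsupp_def)
  qed (auto simp: annihilator_def carrier_fa_ring finite_fsupp_fa_add rep_entry_fa_add rep_entry_fa_zero)
qed (auto simp: annihilator_def carrier_fa_ring finite_fsupp_fa_mult
      intro: rep_entry_fa_mult_left_zero rep_entry_fa_mult_right_zero)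

lemma rep_entry_edge_ghost:
  assumes "valid x"
  shows "rep_entry (fa_mult (gen_el (Ed e)) (gen_el (Gh e)) :: ('v,'e,'k::field) fa) y x
    = of_bool (y = x \<and> (\<exists>x'. pop x = Some (e, x')))"
  using pop_SomeD[OF _ assms]
  by (auto simp: rep_entry_gen_el_mult bind_eq_Some_conv split: option.splits)

lemma rep_entry_vertex_minus_edge_sum:
  assumes "finite E" "E \<subseteq> s -` {u}" "valid x"
  shows "rep_entry (fa_diff (gen_el (Vx u)) (fa_sum (\<lambda>e. fa_mult (gen_el (Ed e)) (gen_el (Gh e))) E)
      :: ('v,'e,'k::field) fa) y x
    = of_bool (y = x \<and> start x = u \<and> (\<forall>e x'. pop x = Some (e, x') \<longrightarrow> e \<notin> E))"
proof -
  have "rep_entry (fa_diff (gen_el (Vx u)) (fa_sum (\<lambda>e. fa_mult (gen_el (Ed e)) (gen_el (Gh e))) E)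
      :: ('v,'e,'k::field) fa) y x
    = of_bool (y = x \<and> start x = u) - (\<Sum>e\<in>E. of_bool (y = x \<and> (\<exists>x'. pop x = Some (e, x'))))"
    using assms(1)
    by (auto simp: rep_entry_fa_diff rep_entry_fa_sum finite_fsupp_fa_sum finite_fsupp_fa_mult
        rep_entry_gen_el rep_entry_edge_ghost[OF assms(3)])
  also have "\<dots> = of_bool (y = x \<and> start x = u \<and> (\<forall>e x'. pop x = Some (e, x') \<longrightarrow> e \<notin> E))"
  proof (cases "pop x")
    case (Some p)
    then obtain e0 x' where pop_x: "pop x = Some (e0, x')" by (cases p) auto
    have "(\<Sum>e\<in>E. of_bool (y = x \<and> e0 = e)) = (of_bool (y = x \<and> e0 \<in> E) :: 'k)"
      using assms(1) by (cases "y = x") (simp_all add: sum.delta)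
    moreover have "e0 \<in> E \<Longrightarrow> start x = u"
      using assms(2) pop_SomeD(4)[OF pop_x assms(3)] by auto
    ultimately show ?thesis
      using pop_x by auto
  qed simp
  finally show ?thesis .
qed

lemma gen_el_mult_minus_in_annihilator:
  fixes t :: "('v,'e,'k::field) fa"
  assumes "finite (fsupp t)"
    and "\<And>x y. valid x \<Longrightarrow> rep_entry t y x = of_bool (Option.bind (gen_act h x) (gen_act g) = Some y)"
  shows "fa_diff (fa_mult (gen_el g) (gen_el h)) t \<in> annihilator"
  using assms
  by (simp add: annihilator_def finite_fsupp_fa_diff finite_fsupp_fa_mult rep_entry_fa_diff
      rep_entry_gen_el_mult)

lemma lpa_rels_subset_annihilator: "lpa_rels s r \<subseteq> (annihilator :: ('v,'e,'k::field) fa set)"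
proof -
  let ?A = "annihilator :: ('v,'e,'k::field) fa set"
  have V: "fa_diff (fa_mult (gen_el (Vx v)) (gen_el (Vx w))) (if v = w then gen_el (Vx v) else fa_zero) \<in> ?A"
    for v w
    by (rule gen_el_mult_minus_in_annihilator) (auto simp: rep_entry_gen_el rep_entry_fa_zero)
  have E1: "fa_diff (fa_mult (gen_el (Vx (s e))) (gen_el (Ed e))) (gen_el (Ed e)) \<in> ?A" for e
    by (rule gen_el_mult_minus_in_annihilator) (auto simp: rep_entry_gen_el push)
  have E2: "fa_diff (fa_mult (gen_el (Ed e)) (gen_el (Vx (r e)))) (gen_el (Ed e)) \<in> ?A" for e
    by (rule gen_el_mult_minus_in_annihilator) (auto simp: rep_entry_gen_el)
  have G1: "fa_diff (fa_mult (gen_el (Vx (r e))) (gen_el (Gh e))) (gen_el (Gh e)) \<in> ?A" for e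
    by (rule gen_el_mult_minus_in_annihilator)
      (auto simp: rep_entry_gen_el pop_SomeD(3) split: option.splits)
  have G2: "fa_diff (fa_mult (gen_el (Gh e)) (gen_el (Vx (s e)))) (gen_el (Gh e)) \<in> ?A" for e
    by (rule gen_el_mult_minus_in_annihilator)
      (auto simp: rep_entry_gen_el bind_eq_Some_conv pop_SomeD(4) split: option.splits)
  have CK1: "fa_diff (fa_mult (gen_el (Gh e)) (gen_el (Ed f))) (if e = f then gen_el (Vx (r e)) else fa_zero)
      \<in> ?A" for e f
    by (rule gen_el_mult_minus_in_annihilator) (auto simp: rep_entry_gen_el rep_entry_fa_zero push)
  have CK2: "fa_diff (gen_el (Vx v)) (fa_sum (\<lambda>e. fa_mult (gen_el (Ed e)) (gen_el (Gh e))) (s -` {v}))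
      \<in> ?A" if "regular_vertex s v" for v
  proof -
    have "finite (s -` {v})" using that by (simp add: regular_vertex_def)
    moreover have "valid x \<Longrightarrow> start x = v \<Longrightarrow> \<exists>e x'. pop x = Some (e, x') \<and> s e = v" for x
      using pop_regular that pop_SomeD(4) by fastforce
    ultimately show ?thesis
      by (auto simp: annihilator_def rep_entry_vertex_minus_edge_sum finite_fsupp_fa_diff
          finite_fsupp_fa_sum finite_fsupp_fa_mult)
  qed
  show ?thesis
    unfolding lpa_rels_def using V E1 E2 G1 G2 CK1 CK2 by blast
qed

lemma vertex_in_annihilator: "u \<in> H \<Longrightarrow> gen_el (Vx u) \<in> (annihilator :: ('v,'e,'k::field) fa set)"
  using start_notin_H by (auto simp: annihilator_def rep_entry_gen_el)

lemma vH_in_annihilator: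
  assumes "u \<in> S" "finite (s -` {u} \<inter> r -` (- H))"
  shows "vH s r H u \<in> (annihilator :: ('v,'e,'k::field) fa set)"
proof -
  have "valid x \<Longrightarrow> start x = u \<Longrightarrow> \<exists>e x'. pop x = Some (e, x') \<and> s e = u \<and> r e \<notin> H" for x
    using pop_S assms(1) pop_SomeD(4) by fastforce
  then show ?thesis
    using assms(2)
    by (auto simp: annihilator_def vH_def rep_entry_vertex_minus_edge_sum finite_fsupp_fa_diff
        finite_fsupp_fa_sum finite_fsupp_fa_mult)
qed

lemma rep_entry_vH_fixed:
  assumes "finite (s -` {v} \<inter> r -` (- G))" "valid x" "start x = v"
    and "\<forall>e x'. pop x = Some (e, x') \<longrightarrow> r e \<in> G"
  shows "rep_entry (vH s r G v :: ('v,'e,'k::field) fa) x x = 1"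
proof -
  have "\<forall>e x'. pop x = Some (e, x') \<longrightarrow> e \<notin> s -` {v} \<inter> r -` (- G)"
    using assms(4) by blast
  then show ?thesis
    unfolding vH_def using assms(3)
    by (simp add: rep_entry_vertex_minus_edge_sum[OF assms(1) _ assms(2)])
qed

lemma vH_notin_annihilator:
  assumes "finite (s -` {v} \<inter> r -` (- G))" "valid x" "start x = v"
    and "\<forall>e x'. pop x = Some (e, x') \<longrightarrow> r e \<in> G"
  shows "vH s r G v \<notin> (annihilator :: ('v,'e,'k::field) fa set)"
  using rep_entry_vH_fixed[OF assms] assms(2) unfolding annihilator_def
  by (metis (mono_tags) mem_Collect_eq zero_neq_one)

lemma vH_notin_I_HS:
  assumes "S \<subseteq> breaking_vertices s r H" "finite (s -` {v} \<inter> r -` (- G))"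
    and "valid x" "start x = v" "\<forall>e x'. pop x = Some (e, x') \<longrightarrow> r e \<in> G"
  shows "lpa_cls s r (vH s r G v :: ('v,'e,'k::field) fa) \<notin> I_HS s r H S"
proof (rule lpa_cls_notin_I_HS[OF ideal_annihilator lpa_rels_subset_annihilator])
  show "(\<lambda>u. gen_el (Vx u)) ` H \<subseteq> (annihilator :: ('v,'e,'k::field) fa set)"
    using vertex_in_annihilator by blast
  show "vH s r H ` S \<subseteq> (annihilator :: ('v,'e,'k::field) fa set)"
    using vH_in_annihilator assms(1) by (auto simp: breaking_vertices_def)
  show "vH s r G v \<notin> (annihilator :: ('v,'e,'k::field) fa set)"
    by (rule vH_notin_annihilator[OF assms(2-5)])
  show "vH s r G v \<in> carrier fa_ring"
    using assms(2) by (simp add: carrier_fa_ring vH_def finite_fsupp_fa_diff finite_fsupp_fa_sum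
        finite_fsupp_fa_mult)
qed

end

section \<open>Paths avoiding a hereditary saturated set\<close>

lemma hereditary_range: "hereditary s r H \<Longrightarrow> s e \<in> H \<Longrightarrow> r e \<in> H"
  unfolding hereditary_def edge_rel_def by blast

text \<open>Finite paths ending at z, as lists of edges; the empty list is the trivial path at z.\<close>

fun path_start :: "('e \<Rightarrow> 'v) \<Rightarrow> 'v \<Rightarrow> 'e list \<Rightarrow> 'v" where
  "path_start s z [] = z"
| "path_start s z (e # m) = s e"

fun path_to :: "('e \<Rightarrow> 'v) \<Rightarrow> ('e \<Rightarrow> 'v) \<Rightarrow> 'v \<Rightarrow> 'e list \<Rightarrow> bool" where
  "path_to s r z [] = True"
| "path_to s r z (e # m) \<longleftrightarrow> path_to s r z m \<and> path_start s z m = r e"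

fun uncons :: "'a list \<Rightarrow> ('a \<times> 'a list) option" where
  "uncons [] = None"
| "uncons (e # m) = Some (e, m)"

lemma path_space_paths_to:
  assumes "hereditary s r H" "z \<notin> H" "\<not> regular_vertex s z" "z \<notin> S"
  shows "path_space s r H S (path_to s r z) (path_start s z) uncons (#)"
proof
  show start_notin_H: "path_start s z m \<notin> H" if "path_to s r z m" for m
    using that by (induction m) (use assms(1,2) hereditary_range[OF assms(1)] in auto)
  show "\<exists>e m'. uncons m = Some (e, m') \<and> r e \<notin> H" if "path_to s r z m" "path_start s z m \<in> S" for m
    using that assms(4) start_notin_H[of "tl m"] by (cases m) auto
  show "uncons m \<noteq> None" if "path_to s r z m" "regular_vertex s (path_start s z m)" for m
    using that assms(3) by (cases m) auto
  show "m = e # m' \<and> path_to s r z m' \<and> path_start s z m' = r e"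
    if "path_to s r z m" "uncons m = Some (e, m')" for m e m'
    using that by (cases m) auto
qed simp

lemma path_to_map_upt:
  assumes "\<And>i. i < n \<Longrightarrow> s (f i) = u i \<and> r (f i) = u (Suc i)" and "k \<le> n"
  shows "path_to s r (u n) (map f [k..<n]) \<and> path_start s (u n) (map f [k..<n]) = u k"
  using assms(2)
proof (induction k rule: inc_induct)
  case (step k)
  then show ?case
    using assms(1)[OF step(2)] by (simp add: upt_conv_Cons)
qed simp

definition infinite_path_avoiding :: "('e \<Rightarrow> 'v) \<Rightarrow> ('e \<Rightarrow> 'v) \<Rightarrow> 'v set \<Rightarrow> (nat \<Rightarrow> 'e) \<Rightarrow> bool" where
  "infinite_path_avoiding s r H p \<longleftrightarrow> (\<forall>i. s (p (Suc i)) = r (p i) \<and> r (p i) \<notin> H)"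

lemma path_space_infinite_paths:
  assumes "hereditary s r H"
  shows "path_space s r H S (infinite_path_avoiding s r H) (\<lambda>p. s (p 0))
    (\<lambda>p. Some (p 0, \<lambda>i. p (Suc i))) case_nat"
proof
  show start_notin_H: "s (p 0) \<notin> H" if "infinite_path_avoiding s r H p" for p
    using that hereditary_range[OF assms] unfolding infinite_path_avoiding_def by metis
  show "infinite_path_avoiding s r H (case_nat e p) \<and>
      Some (case_nat e p 0, \<lambda>i. case_nat e p (Suc i)) = Some (e, p) \<and> s (case_nat e p 0) = s e"
    if "infinite_path_avoiding s r H p" "s (p 0) = r e" for p e
    using that start_notin_H[OF that(1)] by (auto simp: infinite_path_avoiding_def split: nat.splits)
  show "p = case_nat e p' \<and> infinite_path_avoiding s r H p' \<and> s (p' 0) = r e"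
    if "infinite_path_avoiding s r H p" "Some (p 0, \<lambda>i. p (Suc i)) = Some (e, p')" for p e p'
  proof -
    have "e = p 0" "p' = (\<lambda>i. p (Suc i))"
      using that(2) by auto
    moreover have "p = case_nat (p 0) (\<lambda>i. p (Suc i))"
      by (simp add: fun_eq_iff split: nat.split)
    ultimately show ?thesis
      using that(1) unfolding infinite_path_avoiding_def by auto
  qed
qed (auto simp: infinite_path_avoiding_def)

lemma all_edges_into_H_imp_not_regular_notin_S:
  assumes "saturated s r H" "S \<subseteq> breaking_vertices s r H" "u \<notin> H" "\<forall>e. s e = u \<longrightarrow> r e \<in> H"
  shows "\<not> regular_vertex s u" "u \<notin> S"
proof -
  show "\<not> regular_vertex s u"
    using assms(1,3,4) unfolding saturated_def by blast
  have "s -` {u} \<inter> r -` (- H) = {}" using assms(4) by auto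
  then show "u \<notin> S" using assms(2) by (auto simp: breaking_vertices_def)
qed

lemma path_avoiding_exists:
  assumes "saturated s r H" "S \<subseteq> breaking_vertices s r H" "w \<notin> H"
  shows "(\<exists>p. infinite_path_avoiding s r H p \<and> s (p 0) = w) \<or>
    (\<exists>z m. z \<notin> H \<and> \<not> regular_vertex s z \<and> z \<notin> S \<and> path_to s r z m \<and> path_start s z m = w)"
proof -
  define next_edge where "next_edge u = (SOME e. s e = u \<and> r e \<notin> H)" for u
  define vertex where "vertex n = ((\<lambda>u. r (next_edge u)) ^^ n) w" for n
  have next_edge: "s (next_edge u) = u \<and> r (next_edge u) \<notin> H" if "\<exists>e. s e = u \<and> r e \<notin> H" for u
    unfolding next_edge_def using someI_ex[OF that] .
  have vertex_0: "vertex 0 = w" and vertex_Suc: "vertex (Suc n) = r (next_edge (vertex n))" for n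
    by (simp_all add: vertex_def)
  show ?thesis
  proof (cases "\<forall>n. \<exists>e. s e = vertex n \<and> r e \<notin> H")
    case True
    then have step: "s (next_edge (vertex n)) = vertex n \<and> r (next_edge (vertex n)) \<notin> H" for n
      using next_edge by blast
    then have "infinite_path_avoiding s r H (next_edge \<circ> vertex)"
      by (simp add: infinite_path_avoiding_def vertex_Suc[symmetric])
    moreover have "s ((next_edge \<circ> vertex) 0) = w"
      using step[of 0] vertex_0 by simp
    ultimately show ?thesis by blast
  next
    case False
    then obtain n where stuck: "\<forall>e. s e = vertex n \<longrightarrow> r e \<in> H"
      and moving: "\<And>k. k < n \<Longrightarrow> \<exists>e. s e = vertex k \<and> r e \<notin> H"
      using exists_least_iff[of "\<lambda>n. \<not> (\<exists>e. s e = vertex n \<and> r e \<notin> H)"] by blast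
    have notin_H: "vertex k \<notin> H" if "k \<le> n" for k
      using that
    proof (induction k)
      case (Suc k)
      then show ?case using next_edge[OF moving[of k]] vertex_Suc[of k] by simp
    qed (simp add: vertex_0 assms(3))
    have "path_to s r (vertex n) (map (next_edge \<circ> vertex) [0..<n])
        \<and> path_start s (vertex n) (map (next_edge \<circ> vertex) [0..<n]) = vertex 0"
      by (rule path_to_map_upt) (use next_edge[OF moving] vertex_Suc in auto)
    then show ?thesis
      using all_edges_into_H_imp_not_regular_notin_S[OF assms(1,2) notin_H[OF order_refl] stuck]
        notin_H[of n] vertex_0 by blast
  qed
qed

lemma vH_notin_I_HS_if_notin_S:
  assumes "admissible s r H S" "H \<subseteq> G" "v \<in> breaking_vertices s r G" "v \<notin> S"
  shows "lpa_cls s r (vH s r G v :: ('v,'e,'k::field) fa) \<notin> I_HS s r H S"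
proof -
  have v: "v \<notin> H" "\<not> regular_vertex s v" and fin: "finite (s -` {v} \<inter> r -` (- G))"
    using assms(2,3) by (auto simp: breaking_vertices_def infinite_emitter_def regular_vertex_def)
  have hered: "hereditary s r H" and SB: "S \<subseteq> breaking_vertices s r H"
    using assms(1) by (simp_all add: admissible_def)
  interpret path_space s r H S "path_to s r v" "path_start s v" uncons "(#)"
    by (rule path_space_paths_to[OF hered v assms(4)])
  show ?thesis
    by (rule vH_notin_I_HS[OF SB fin, where x = "[]"]) simp_all
qed

text \<open>The edge e followed by a path avoiding H from r e is fixed by the element v^G,
  because e does not occur in its sum.\<close>

lemma vH_notin_I_HS_if_edge_into_difference:
  assumes "admissible s r H S" "v \<in> breaking_vertices s r G" "s e = v" "r e \<in> G" "r e \<notin> H"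
  shows "lpa_cls s r (vH s r G v :: ('v,'e,'k::field) fa) \<notin> I_HS s r H S"
proof -
  have hered: "hereditary s r H" and sat: "saturated s r H" and SB: "S \<subseteq> breaking_vertices s r H"
    using assms(1) by (simp_all add: admissible_def)
  have fin: "finite (s -` {v} \<inter> r -` (- G))"
    using assms(2) by (simp add: breaking_vertices_def)
  from path_avoiding_exists[OF sat SB assms(5)] show ?thesis
  proof (elim disjE exE conjE)
    fix p assume p: "infinite_path_avoiding s r H p" "s (p 0) = r e"
    interpret path_space s r H S "infinite_path_avoiding s r H" "\<lambda>p. s (p 0)"
      "\<lambda>p. Some (p 0, \<lambda>i. p (Suc i))" case_nat
      by (rule path_space_infinite_paths[OF hered])
    show ?thesis
      by (rule vH_notin_I_HS[OF SB fin, where x = "case_nat e p"]) (use push[OF p] assms(3,4) in auto)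
  next
    fix z m
    assume z: "z \<notin> H" "\<not> regular_vertex s z" "z \<notin> S"
      and m: "path_to s r z m" "path_start s z m = r e"
    interpret path_space s r H S "path_to s r z" "path_start s z" uncons "(#)"
      by (rule path_space_paths_to[OF hered z])
    show ?thesis
      by (rule vH_notin_I_HS[OF SB fin, where x = "e # m"]) (use m assms(3,4) in auto)
  qed
qed

lemma vH_eq_if_no_edge_into_difference:
  assumes "H \<subseteq> G" "\<forall>e. s e = v \<longrightarrow> r e \<notin> G - H"
  shows "vH s r G v = vH s r H v"
proof -
  have "s -` {v} \<inter> r -` (- G) = s -` {v} \<inter> r -` (- H)"
    using assms by auto
  then show ?thesis by (simp add: vH_def)
qed

lemma vH_in_I_HS: "v \<in> S \<Longrightarrow> lpa_cls s r (vH s r H v) \<in> I_HS s r H S"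
  unfolding I_HS_def genideal_def by blast

theorem lemma3:
  fixes s r :: "'e \<Rightarrow> 'v" and H S G T :: "'v set" and v :: 'v
  assumes "admissible s r H S" and "admissible s r G T"
    and "adm_le (H, S) (G, T)"
    and "v \<in> breaking_vertices s r G"
  shows "lpa_cls s r (vH s r G v :: ('v,'e,'k::field) fa) \<in> (I_HS s r H S :: ('v,'e,'k) fa set set)
         \<longleftrightarrow> v \<in> S \<and> (\<forall>e. s e = v \<longrightarrow> r e \<notin> G - H)"
proof -
  have HG: "H \<subseteq> G"
    using assms(3) by (simp add: adm_le_def)
  show ?thesis
  proof
    assume "lpa_cls s r (vH s r G v :: ('v,'e,'k::field) fa) \<in> I_HS s r H S"
    then show "v \<in> S \<and> (\<forall>e. s e = v \<longrightarrow> r e \<notin> G - H)"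
      using vH_notin_I_HS_if_notin_S[OF assms(1) HG assms(4)]
        vH_notin_I_HS_if_edge_into_difference[OF assms(1,4)] by blast
  next
    assume condition: "v \<in> S \<and> (\<forall>e. s e = v \<longrightarrow> r e \<notin> G - H)"
    with HG have "vH s r G v = (vH s r H v :: ('v,'e,'k::field) fa)"
      by (intro vH_eq_if_no_edge_into_difference) simp_all
    then show "lpa_cls s r (vH s r G v :: ('v,'e,'k::field) fa) \<in> I_HS s r H S"
      using vH_in_I_HS[of v S s r H] condition by simp
  qed
qed

end
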